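(* Let $X$ be a separable Banach space. There exists a sequence $(a_k)_{k\ge 0}$ of elements of $X$ such that: (1) for every infinite set $A\subset\mathbb{N}$, the closed linear span of $\{a_k : k\in A\}$ equals $X$; (2) for every bounded linear operator $T:X\to X$, setting $\eta=\{k\ge 0: Ta_k\neq 0\}$, the family $\big(Ta_k/\|Ta_k\|\big)_{k\in\eta}$ is relatively compact in $X$.
   Context: "span" denotes the closed linear span. *)

theory Defs
  imports "HOL-Analysis.Analysis"
begin

end

theory Submission imports Defs "HOL-Real_Asymp.Real_Asymp" begin

(* Let (x_n) be a sequence in the unit ball whose linear span is dense; it
   exists since X is separable.  For |s| < 1 put  r_m(s) = \<Sum>_n s^n x_(n+m)  (the m-th tail
   of the power series with coefficients x_n), and take  a_k = r_0(t_k)  with t_k = 1/(k+2).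

   (1) Since r_m(s) = x_m + s r_(m+1)(s) and r_m(s) \<rightarrow> x_m as s \<rightarrow> 0, a closed subspace
       containing r_0(s_j) for a null sequence s_j > 0 contains, by induction on m, every
       r_m(s_j) and hence every x_m.  Apply this to (t_k) along an infinite set A.
   (2) If T x_n = 0 for all n then T a_k = 0.  Otherwise let m be least with T x_m \<noteq> 0;
       then T a_k = t_k^m T r_m(t_k), so the normalised vectors T a_k / \<parallel>T a_k\<parallel> agree
       with sgn (T r_m(t_k)), which converge to sgn (T x_m).  A subset of a convergent
       sequence has compact closure. *)

lemma subspace_closure:
  fixes S :: "'a::real_normed_vector set"
  assumes "subspace S"
  shows "subspace (closure S)"
  unfolding subspace_def
proof (intro conjI ballI allI)
  show "0 \<in> closure S" using assms closure_subset subspace_0 by blast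
next
  fix x y assume "x \<in> closure S" "y \<in> closure S"
  then obtain f g where f: "\<And>n. f n \<in> S" "f \<longlonglongrightarrow> x" and g: "\<And>n. g n \<in> S" "g \<longlonglongrightarrow> y"
    by (meson closure_sequential)
  have "(\<lambda>n. f n + g n) \<longlonglongrightarrow> x + y" using f g by (intro tendsto_add)
  moreover have "f n + g n \<in> S" for n using f g assms subspace_add by blast
  ultimately show "x + y \<in> closure S" by (meson closure_sequential)
next
  fix c :: real and x assume "x \<in> closure S"
  then obtain f where f: "\<And>n. f n \<in> S" "f \<longlonglongrightarrow> x"
    by (meson closure_sequential)
  have "(\<lambda>n. c *\<^sub>R f n) \<longlonglongrightarrow> c *\<^sub>R x" using f by (intro tendsto_scaleR) auto
  moreover have "c *\<^sub>R f n \<in> S" for n using f assms subspace_scale by blast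
  ultimately show "c *\<^sub>R x \<in> closure S" by (meson closure_sequential)
qed

text \<open>Any set of terms of a convergent sequence has compact closure (no local compactness
  is needed: the range together with the limit is already compact).\<close>

lemma compact_closure_subset_convergent:
  fixes f :: "nat \<Rightarrow> 'a::metric_space"
  assumes "f \<longlonglongrightarrow> l" and "B \<subseteq> range f"
  shows "compact (closure B)"
proof -
  have K: "compact (insert l (range f))"
    using compactin_sequence_with_limit[of euclidean f l "range f"] assms(1) by simp
  then have "closure B \<subseteq> insert l (range f)"
    using assms(2) by (meson closure_minimal compact_imp_closed subset_insertI2)
  then show ?thesis
    using compact_Int_closed[OF K closed_closure, of B] by (simp add: Int_absorb1)
qed

text \<open>A separable normed space contains a sequence in the closed unit ball whose linear
  span is dense: rescale a countable dense set into the ball.\<close>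

lemma separable_obtain_total_sequence:
  assumes "separable_space (euclidean :: 'a::real_normed_vector topology)"
  obtains x :: "nat \<Rightarrow> 'a::real_normed_vector" where "\<And>n. norm (x n) \<le> 1" and "closure (span (range x)) = UNIV"
proof -
  obtain D :: "'a set" where D: "countable D" "closure D = UNIV"
    using assms unfolding separable_space_def by auto
  then have "D \<noteq> {}" by auto
  define d where "d = from_nat_into D"
  have range_d: "range d = D" unfolding d_def using D \<open>D \<noteq> {}\<close> by simp
  define x where "x n = inverse (1 + norm (d n)) *\<^sub>R d n" for n
  have "norm (x n) \<le> 1" for n
  proof -
    have "norm (x n) = norm (d n) / (1 + norm (d n))"
      unfolding x_def by (simp add: divide_inverse_commute)
    also have "\<dots> \<le> 1" by (simp add: add_pos_nonneg divide_le_eq)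
    finally show ?thesis .
  qed
  moreover have "D \<subseteq> span (range x)"
  proof
    fix z assume "z \<in> D"
    then obtain n where "z = d n" using range_d by auto
    moreover have "d n = (1 + norm (d n)) *\<^sub>R x n"
    proof -
      have "1 + norm (d n) > 0" by (simp add: add_pos_nonneg)
      then show ?thesis unfolding x_def by simp
    qed
    ultimately show "z \<in> span (range x)" by (metis rangeI span_base span_mul)
  qed
  then have "closure (span (range x)) = UNIV" using D closure_mono by blast
  ultimately show ?thesis using that by blast
qed

context
  fixes x :: "nat \<Rightarrow> 'a::banach"
  assumes norm_le_1: "\<And>n. norm (x n) \<le> 1"
begin

definition tail_series :: "nat \<Rightarrow> real \<Rightarrow> 'a" where
  "tail_series m s = (\<Sum>n. s^n *\<^sub>R x (n+m))"

lemma tail_series_summable_norm: "\<bar>s\<bar> < 1 \<Longrightarrow> summable (\<lambda>n. norm (s^n *\<^sub>R x (n+m)))"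
  and tail_series_summable: "\<bar>s\<bar> < 1 \<Longrightarrow> summable (\<lambda>n. s^n *\<^sub>R x (n+m))"
proof -
  assume s: "\<bar>s\<bar> < 1"
  have bound: "norm (norm (s^n *\<^sub>R x (n+m))) \<le> \<bar>s\<bar>^n" for n
    using norm_le_1[of "n+m"] by (simp add: power_abs mult_left_le)
  have "summable (\<lambda>n. \<bar>s\<bar>^n)" using s by (simp add: summable_geometric)
  then show "summable (\<lambda>n. norm (s^n *\<^sub>R x (n+m)))"
    by (rule summable_comparison_test') (rule bound)
  then show "summable (\<lambda>n. s^n *\<^sub>R x (n+m))" by (rule summable_norm_cancel)
qed

lemma tail_series_unfold:
  assumes "\<bar>s\<bar> < 1"
  shows "tail_series m s = x m + s *\<^sub>R tail_series (Suc m) s"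
proof -
  have "tail_series m s = (\<Sum>n. s^(Suc n) *\<^sub>R x (Suc n+m)) + x m"
    unfolding tail_series_def using suminf_split_head[OF tail_series_summable[OF assms]] by simp
  also have "(\<Sum>n. s^(Suc n) *\<^sub>R x (Suc n+m)) = (\<Sum>n. s *\<^sub>R (s^n *\<^sub>R x (n+Suc m)))"
    by simp
  also have "\<dots> = s *\<^sub>R tail_series (Suc m) s"
    unfolding tail_series_def using suminf_scaleR_right[OF tail_series_summable[OF assms, of "Suc m"]] by simp
  finally show ?thesis by simp
qed

text \<open>Comparison with the geometric series bounds every tail uniformly for |s| \<le> 1/2.\<close>

lemma norm_tail_series_le:
  assumes "\<bar>s\<bar> \<le> 1/2"
  shows "norm (tail_series m s) \<le> 2"
proof -
  have s: "\<bar>s\<bar> < 1" using assms by simp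
  have "norm (tail_series m s) \<le> (\<Sum>n. norm (s^n *\<^sub>R x (n+m)))"
    unfolding tail_series_def by (rule summable_norm[OF tail_series_summable_norm[OF s]])
  also have "\<dots> \<le> (\<Sum>n. \<bar>s\<bar>^n)"
    using tail_series_summable_norm[OF s] s norm_le_1
    by (intro suminf_le) (auto simp: summable_geometric power_abs mult_left_le)
  also have "\<dots> = 1 / (1 - \<bar>s\<bar>)" using suminf_geometric[of "\<bar>s\<bar>"] s by simp
  also have "\<dots> \<le> 2" using assms by (simp add: field_simps)
  finally show ?thesis .
qed

lemma tail_series_tendsto:
  assumes "\<And>j. \<bar>s j\<bar> \<le> 1/2" and "s \<longlonglongrightarrow> 0"
  shows "(\<lambda>j. tail_series m (s j)) \<longlonglongrightarrow> x m"
proof -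
  have "\<forall>j. norm (tail_series m (s j) - x m) \<le> 2 * \<bar>s j\<bar>"
  proof
    fix j
    have "tail_series m (s j) - x m = s j *\<^sub>R tail_series (Suc m) (s j)"
      using tail_series_unfold[of "s j" m] assms(1)[of j] by simp
    then have "norm (tail_series m (s j) - x m) = \<bar>s j\<bar> * norm (tail_series (Suc m) (s j))"
      by simp
    also have "\<dots> \<le> \<bar>s j\<bar> * 2"
      by (rule mult_left_mono[OF norm_tail_series_le[OF assms(1)]]) simp
    finally show "norm (tail_series m (s j) - x m) \<le> 2 * \<bar>s j\<bar>" by simp
  qed
  moreover have "(\<lambda>j. 2 * \<bar>s j\<bar>) \<longlonglongrightarrow> 0"
    using tendsto_mult_right_zero[OF tendsto_rabs_zero[OF assms(2)]] .
  ultimately have "(\<lambda>j. tail_series m (s j) - x m) \<longlonglongrightarrow> 0"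
    by (rule Lim_null_comparison[OF always_eventually])
  then show ?thesis by (rule LIM_zero_cancel)
qed

text \<open>By the recursion, a closed
  subspace containing all tail_series m (s j) contains all tail_series (Suc m) (s j);
  letting j \<rightarrow> \<infinity> it contains x m.\<close>

lemma coefficients_in_closed_subspace:
  assumes S: "closed S" "subspace S"
    and s: "\<And>j. 0 < s j" "\<And>j. s j \<le> 1/2" "s \<longlonglongrightarrow> 0"
    and values_in_S: "\<And>j. tail_series 0 (s j) \<in> S"
  shows "x m \<in> S"
proof -
  have abs_s: "\<bar>s j\<bar> \<le> 1/2" for j using s(1,2)[of j] by simp
  have coeff: "x m \<in> S" if "\<forall>j. tail_series m (s j) \<in> S" for m
    using closed_sequentially[OF S(1) _ tail_series_tendsto[OF abs_s s(3)]] that by blast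
  have "\<forall>j. tail_series m (s j) \<in> S" for m
  proof (induction m)
    case 0
    then show ?case using values_in_S by blast
  next
    case (Suc m)
    have "tail_series (Suc m) (s j) = inverse (s j) *\<^sub>R (tail_series m (s j) - x m)" for j
      using tail_series_unfold[of "s j" m] abs_s[of j] s(1)[of j] by simp
    then show ?case using Suc coeff[OF Suc] S(2) by (simp add: subspace_diff subspace_scale)
  qed
  then show ?thesis using coeff by blast
qed

text \<open>Enumerating A
  gives a positive null subsequence, to which the previous lemma applies.\<close>

lemma dense_span_on_infinite_set:
  assumes total: "closure (span (range x)) = UNIV"
    and t: "\<And>k. 0 < t k" "\<And>k. t k \<le> 1/2" "t \<longlonglongrightarrow> 0"
    and A: "infinite A"
  shows "closure (span ((\<lambda>k. tail_series 0 (t k)) ` A)) = UNIV"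
proof -
  define C where "C = closure (span ((\<lambda>k. tail_series 0 (t k)) ` A))"
  have C: "closed C" "subspace C" unfolding C_def by (simp_all add: subspace_closure)
  obtain e :: "nat \<Rightarrow> nat" where e: "strict_mono e" "\<forall>j. e j \<in> A"
    using infinite_enumerate[OF A] by blast
  have "(t \<circ> e) \<longlonglongrightarrow> 0" using LIMSEQ_subseq_LIMSEQ[OF t(3) e(1)] .
  moreover have "tail_series 0 ((t \<circ> e) j) \<in> C" for j
  proof -
    have "tail_series 0 (t (e j)) \<in> span ((\<lambda>k. tail_series 0 (t k)) ` A)"
      using e(2) by (simp add: span_base)
    then show ?thesis unfolding C_def comp_def using closure_subset by blast
  qed
  ultimately have "x n \<in> C" for n
    using coefficients_in_closed_subspace[OF C, of "t \<circ> e"] t(1,2) by simp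
  then have "span (range x) \<subseteq> C" using C(2) by (intro span_minimal) auto
  then have "closure (span (range x)) \<subseteq> C" using C(1) by (rule closure_minimal)
  then show ?thesis using total unfolding C_def by auto
qed

lemma linear_tail_series_factor:
  assumes T: "linear T" and s: "\<bar>s\<bar> < 1" and kill: "\<And>j. j < m \<Longrightarrow> T (x j) = 0"
  shows "T (tail_series 0 s) = s^m *\<^sub>R T (tail_series m s)"
  using kill
proof (induction m)
  case (Suc m)
  have "T (tail_series m s) = s *\<^sub>R T (tail_series (Suc m) s)"
    using tail_series_unfold[OF s, of m] Suc.prems[of m]
    by (simp add: linear_add[OF T] linear_cmul[OF T])
  then show ?case using Suc by simp
qed simp

text \<open>Key point of part (2): the normalised images under a bounded operator of the series
  at a positive null sequence stay inside a convergent sequence, hence have compact closure.\<close>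

lemma compact_closure_sgn_image:
  assumes T: "bounded_linear T"
    and s: "\<And>j. 0 < s j" "\<And>j. s j \<le> 1/2" "s \<longlonglongrightarrow> 0"
  shows "compact (closure ((\<lambda>j. sgn (T (tail_series 0 (s j)))) ` B))"
proof (cases "\<forall>n. T (x n) = 0")
  case True
  have "T (tail_series 0 (s j)) = 0" for j
  proof -
    have "\<bar>s j\<bar> < 1" using s(1,2)[of j] by simp
    then have "T (tail_series 0 (s j)) = (\<Sum>n. T (s j ^ n *\<^sub>R x (n+0)))"
      unfolding tail_series_def by (rule bounded_linear.suminf[OF T tail_series_summable])
    also have "\<dots> = 0"
      using True by (simp add: linear_cmul[OF bounded_linear.linear[OF T]])
    finally show ?thesis .
  qed
  then have "(\<lambda>j. sgn (T (tail_series 0 (s j)))) ` B \<subseteq> range (\<lambda>_. 0)" by auto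
  then show ?thesis by (rule compact_closure_subset_convergent[OF tendsto_const])
next
  case False
  define m where "m = (LEAST n. T (x n) \<noteq> 0)"
  have Tm: "T (x m) \<noteq> 0" unfolding m_def by (rule LeastI_ex) (use False in auto)
  have kill: "T (x j) = 0" if "j < m" for j using that not_less_Least unfolding m_def by blast
  define u where "u j = sgn (T (tail_series m (s j)))" for j
  have abs_s: "\<bar>s j\<bar> \<le> 1/2" for j using s(1,2)[of j] by simp
  have "(\<lambda>j. T (tail_series m (s j))) \<longlonglongrightarrow> T (x m)"
    using bounded_linear.tendsto[OF T tail_series_tendsto[OF abs_s s(3)]] .
  then have "u \<longlonglongrightarrow> sgn (T (x m))" unfolding u_def using Tm by (rule tendsto_sgn)
  moreover have "sgn (T (tail_series 0 (s j))) = u j" for j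
  proof -
    have "\<bar>s j\<bar> < 1" using abs_s[of j] by simp
    then have "T (tail_series 0 (s j)) = s j ^ m *\<^sub>R T (tail_series m (s j))"
      by (rule linear_tail_series_factor[OF bounded_linear.linear[OF T] _ kill])
    moreover have "sgn (s j ^ m) = 1" using s(1)[of j] by simp
    ultimately show ?thesis unfolding u_def by (simp add: sgn_scaleR)
  qed
  then have "(\<lambda>j. sgn (T (tail_series 0 (s j)))) ` B \<subseteq> range u" by auto
  ultimately show ?thesis by (rule compact_closure_subset_convergent)
qed

end

theorem mainTheorem1:
  fixes dummy :: "'a :: banach"
  assumes "separable_space (euclidean :: 'a topology)"
  shows "\<exists>a :: nat \<Rightarrow> 'a.
           (\<forall>A. infinite A \<longrightarrow> closure (span (a ` A)) = UNIV) \<and>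
           (\<forall>T :: 'a \<Rightarrow> 'a. bounded_linear T \<longrightarrow>
              compact (closure ((\<lambda>k. scaleR (inverse (norm (T (a k)))) (T (a k)))
                                  ` {k. T (a k) \<noteq> 0})))"
proof -
  obtain x :: "nat \<Rightarrow> 'a" where x: "\<And>n. norm (x n) \<le> 1" and total: "closure (span (range x)) = UNIV"
    using separable_obtain_total_sequence[OF assms] by blast
  define t :: "nat \<Rightarrow> real" where "t k = inverse (real k + 2)" for k
  have t: "\<And>k. 0 < t k" "\<And>k. t k \<le> 1/2" "t \<longlonglongrightarrow> 0"
    unfolding t_def by (simp, simp add: field_simps, real_asymp)
  define a where "a k = tail_series x 0 (t k)" for k
  have "closure (span (a ` A)) = UNIV" if "infinite A" for A
    unfolding a_def by (rule dense_span_on_infinite_set[where x=x, OF x total t that])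
  moreover have "compact (closure ((\<lambda>k. scaleR (inverse (norm (T (a k)))) (T (a k)))
                                  ` {k. T (a k) \<noteq> 0}))" if "bounded_linear T" for T
  proof -
    have normalised_eq_sgn:
      "(\<lambda>k. scaleR (inverse (norm (T (a k)))) (T (a k))) = (\<lambda>k. sgn (T (tail_series x 0 (t k))))"
      unfolding a_def by (simp add: sgn_div_norm)
    show ?thesis
      unfolding normalised_eq_sgn by (rule compact_closure_sgn_image[where x=x, OF x that t])
  qed
  ultimately show ?thesis by blast
qed

end
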